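(* Let $n\ge 4$, $N=\{1,\dots,n\}$, fix distinct $i_1,i_2\in N$ and let $\hat N^c=N\setminus\{i_1,i_2\}$. Then the inequality $$x_{i_2i_1}+\sum_{j\in\hat N^c}\left(x_{i_1j}+x_{ji_1}\right)-\sum_{j\in\hat N^c}x_{i_2j}-\sum_{j,j'\in\hat N^c:\,j\ne j'} x_{jj'}\le 2-\frac{(n-3)(n-4)}{2}$$ defines a facet of the weak order polytope $P^n_{WO}$.
   Context: Let $N=\{1,\dots,n\}$ and $A_N=\{(i,j): i,j\in N, i\ne j\}$. A weak order on $N$ is a binary relation $W\subseteq N\times N$ that is reflexive, transitive and total; $(i,j)\in W$ is read "$i$ is preferred over or tied with $j$". The characteristic vector of $W$ is $x^W\in\{0,1\}^{A_N}$ with $x^W_{(i,j)}=1$ if $(i,j)\in W$ and $0$ otherwise. The weak order polytope $P^n_{WO}$ is the convex hull of the characteristic vectors of all weak orders on $N$; its points are vectors $x\in\mathbb{R}^{A_N}$ and $x_{ij}$ denotes the coordinate $x_{(i,j)}$. $P^n_{WO}$ has dimension $n(n-1)$. An inequality $\pi x\le\pi_0$ defines a facet of a polytope $P$ if it is valid for $P$ (holds for all $x\in P$) and the face $P\cap\{x:\pi x=\pi_0\}$ is nonempty, proper, and contains $\dim(P)$ affinely independent points. *)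

theory Defs
  imports "HOL-Analysis.Analysis"
begin

text \<open>Points of R^{A_N} are
represented as vectors in real^('n \<times> 'n) whose diagonal coordinates are 0 for all
relevant points (the characteristic vectors); this is an affine-isomorphic copy of
R^{A_N}, so dimensions and affine independence are unchanged.\<close>

definition weak_order :: "('n \<times> 'n) set \<Rightarrow> bool" where
  "weak_order W \<longleftrightarrow> refl W \<and> trans W \<and> total W"

definition char_vec :: "('n::finite \<times> 'n) set \<Rightarrow> real ^ ('n \<times> 'n)" where
  "char_vec W = (\<chi> a. if fst a \<noteq> snd a \<and> a \<in> W then 1 else 0)"

definition weak_order_polytope :: "(real ^ ('n::finite \<times> 'n)) set" where
  "weak_order_polytope = convex hull {char_vec W | W. weak_order W}"

definition defines_facet :: "'a::euclidean_space set \<Rightarrow> 'a \<Rightarrow> real \<Rightarrow> bool" where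
  "defines_facet P \<pi> \<pi>0 \<longleftrightarrow>
     (\<forall>x\<in>P. \<pi> \<bullet> x \<le> \<pi>0) \<and>
     (let F = P \<inter> {x. \<pi> \<bullet> x = \<pi>0} in
        F \<noteq> {} \<and> F \<noteq> P \<and>
        (\<exists>S. S \<subseteq> F \<and> finite S \<and> card S = nat (aff_dim P) \<and> \<not> affine_dependent S))"

end

theory Submission
  imports Defs
begin

(* Write m = n - 2 = |Nc|.  For a weak order with characteristic vector x, let t be the number
   of j in Nc tied with i1.  Totality gives sum_{j in Nc} (x_{i1 j} + x_{j i1}) = m + t and
   x_{jj'} + x_{j'j} >= 1 on Nc, with value 2 whenever j, j' are both tied with i1 (transitivity
   through i1); transitivity also gives sum_{j in Nc} x_{i2 j} >= t x_{i2 i1}.  Hence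
     pi x <= x_{i2 i1} (1 - t) + m + t - (m(m-1) + t(t-1))/2,
   which is at most m + 1 - m(m-1)/2 = pi0 for both values of x_{i2 i1}, since (t-1)(t-2) >= 0.

   For the facet property it suffices that every equation y x = c satisfied by all tight
   vertices is y = lambda pi up to the diagonal coordinates, which vanish on the polytope.  The
   tight vertices used are induced by rankings that move i1, i2 and one j in Nc around a second
   element k of Nc; consecutive ones differ in one to four coordinates, and comparing y on them
   pins down every off-diagonal y_{uv}. *)

section \<open>A facet criterion\<close>

lemma aff_dim_le_orthogonal:
  fixes S B :: "'a::euclidean_space set"
  assumes "\<And>x b. x \<in> S \<Longrightarrow> b \<in> B \<Longrightarrow> b \<bullet> x = 0"
  shows "aff_dim S \<le> int DIM('a) - int (dim B)"
proof -
  define D where "D = {y \<in> UNIV. \<forall>x\<in>span B. orthogonal x y}"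
  have "subspace D"
    unfolding D_def by (simp add: subspace_orthogonal_to_vectors)
  have "dim D + dim (span B) = dim (UNIV :: 'a set)"
    unfolding D_def by (rule dim_subspace_orthogonal_to_vectors) (auto simp: subspace_span)
  then have "dim D + dim B = DIM('a)"
    by simp
  moreover have "S \<subseteq> D"
  proof
    fix x assume "x \<in> S"
    have "orthogonal x b" if "b \<in> span B" for b
      using that by (rule orthogonal_to_span) (simp add: assms \<open>x \<in> S\<close> orthogonal_def inner_commute)
    then show "x \<in> D" unfolding D_def by (simp add: orthogonal_commute)
  qed
  then have "aff_dim S \<le> int (dim D)"
    using aff_dim_subset aff_dim_subspace[OF \<open>subspace D\<close>] by metis
  ultimately show ?thesis by linarith
qed

lemma aff_dim_ge_by_equations:
  fixes T E :: "'a::euclidean_space set"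
  assumes "T \<noteq> {}"
    and "\<And>y c. (\<And>x. x \<in> T \<Longrightarrow> y \<bullet> x = c) \<Longrightarrow> y \<in> span E"
  shows "int DIM('a) \<le> aff_dim T + int (dim E)"
proof -
  obtain t where "t \<in> T" using assms(1) by blast
  define U where "U = (+) (- t) ` T"
  have "aff_dim T = int (dim U)"
    unfolding U_def by (rule aff_dim_eq_dim) (rule hull_inc[OF \<open>t \<in> T\<close>])
  define A where "A = {y \<in> UNIV. \<forall>x\<in>span U. orthogonal x y}"
  have "dim A + dim (span U) = dim (UNIV :: 'a set)"
    unfolding A_def by (rule dim_subspace_orthogonal_to_vectors) (auto simp: subspace_span)
  then have "dim A + dim U = DIM('a)"
    by simp
  moreover have "A \<subseteq> span E"
  proof
    fix y assume "y \<in> A"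
    have "y \<bullet> x = y \<bullet> t" if "x \<in> T" for x
    proof -
      have "- t + x \<in> span U" using that unfolding U_def by (intro span_base) auto
      then have "(x - t) \<bullet> y = 0" using \<open>y \<in> A\<close> by (simp add: A_def orthogonal_def)
      then show ?thesis by (simp add: inner_diff_left inner_commute[of y])
    qed
    then show "y \<in> span E" by (rule assms(2))
  qed
  then have "dim A \<le> dim (span E)"
    by (rule dim_subset)
  then have "dim A \<le> dim E"
    by simp
  ultimately have "DIM('a) \<le> dim U + dim E"
    by linarith
  then show ?thesis using \<open>aff_dim T = int (dim U)\<close> by linarith
qed

lemma defines_facet_convex_hullI:
  fixes V B :: "'a::euclidean_space set" and \<pi> :: 'a
  assumes valid: "\<And>v. v \<in> V \<Longrightarrow> \<pi> \<bullet> v \<le> \<pi>0"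
    and tight: "t \<in> V" "\<pi> \<bullet> t = \<pi>0"
    and slack: "q \<in> V" "\<pi> \<bullet> q \<noteq> \<pi>0"
    and orthogonal: "\<And>v b. v \<in> V \<Longrightarrow> b \<in> B \<Longrightarrow> b \<bullet> v = 0"
    and equations: "\<And>y c. (\<And>v. v \<in> V \<Longrightarrow> \<pi> \<bullet> v = \<pi>0 \<Longrightarrow> y \<bullet> v = c) \<Longrightarrow> y \<in> span (insert \<pi> B)"
  shows "defines_facet (convex hull V) \<pi> \<pi>0"
proof -
  define P where "P = convex hull V"
  define T where "T = {v \<in> V. \<pi> \<bullet> v = \<pi>0}"
  have "V \<subseteq> {x. \<pi> \<bullet> x \<le> \<pi>0}"
    using valid by blast
  then have "P \<subseteq> {x. \<pi> \<bullet> x \<le> \<pi>0}"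
    unfolding P_def by (rule hull_minimal) (rule convex_halfspace_le)
  have "V \<subseteq> P"
    unfolding P_def by (rule hull_subset)
  then have "T \<subseteq> P" and "q \<in> P"
    using slack(1) unfolding T_def by auto
  have "q \<notin> affine hull T"
  proof
    assume "q \<in> affine hull T"
    moreover have "affine hull T \<subseteq> {x. \<pi> \<bullet> x = \<pi>0}"
      by (rule hull_minimal) (auto simp: T_def affine_hyperplane)
    ultimately show False using slack(2) by auto
  qed
  then have "aff_dim T + 1 \<le> aff_dim P"
    using aff_dim_insert[of q T] aff_dim_subset[of "insert q T" P] \<open>T \<subseteq> P\<close> \<open>q \<in> P\<close> by simp
  moreover have "aff_dim P \<le> int DIM('a) - int (dim B)"
    unfolding P_def aff_dim_convex_hull using orthogonal by (rule aff_dim_le_orthogonal)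
  moreover have "int DIM('a) \<le> aff_dim T + int (dim (insert \<pi> B))"
    using tight equations by (intro aff_dim_ge_by_equations) (auto simp: T_def)
  moreover have "dim (insert \<pi> B) \<le> dim B + 1"
    by (simp add: dim_insert)
  ultimately have "aff_dim P = aff_dim T + 1" by linarith
  obtain S where S: "S \<subseteq> T" "\<not> affine_dependent S" "affine hull T = affine hull S"
    using affine_basis_exists[of T] by blast
  then have "int (card S) = aff_dim P"
    using aff_dim_affine_independent[OF S(2)] \<open>aff_dim P = aff_dim T + 1\<close>
    by (metis aff_dim_affine_hull)
  moreover have "S \<subseteq> P \<inter> {x. \<pi> \<bullet> x = \<pi>0}" using S(1) \<open>T \<subseteq> P\<close> unfolding T_def by auto
  moreover have "t \<in> P \<inter> {x. \<pi> \<bullet> x = \<pi>0}" using tight \<open>T \<subseteq> P\<close> unfolding T_def by auto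
  ultimately show ?thesis
    unfolding defines_facet_def Let_def P_def[symmetric]
    using \<open>P \<subseteq> {x. \<pi> \<bullet> x \<le> \<pi>0}\<close> \<open>q \<in> P\<close> slack(2) S(2) aff_independent_finite[OF S(2)]
    by (intro conjI) (auto intro!: exI[of _ S])
qed

section \<open>Validity of the inequality\<close>

lemma card_distinct_pairs:
  assumes "finite A"
  shows "real (card {(a, b). a \<in> A \<and> b \<in> A \<and> a \<noteq> b}) = real (card A) * (real (card A) - 1)"
proof -
  have "{(a, b). a \<in> A \<and> b \<in> A \<and> a \<noteq> b} = Sigma A (\<lambda>a. A - {a})"
    by auto
  also have "card \<dots> = (\<Sum>a\<in>A. card (A - {a}))"
    using assms by (intro card_SigmaI) auto
  also have "\<dots> = card A * (card A - 1)"
    by (simp add: card_Diff_singleton)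
  finally show ?thesis
    by (cases "card A") (simp_all add: algebra_simps)
qed

lemma of_nat_mult_pred_ge: "2 * real n - 2 \<le> real n * (real n - 1)"
proof -
  have "0 \<le> (real n - 1) * (real n - 2)"
  proof (cases "n \<ge> 2")
    case True
    then show ?thesis by (intro mult_nonneg_nonneg) auto
  next
    case False
    then have "n = 0 \<or> n = 1" by auto
    then show ?thesis by auto
  qed
  then show ?thesis by (simp add: algebra_simps)
qed

lemma sum_axis_nth: "(\<Sum>p\<in>S. axis p (1::real)) $ i = of_bool (i \<in> S)"
  for S :: "'a::finite set"
  by (simp add: sum_component axis_def)

lemma sum_axis_row_nth: "(\<Sum>j\<in>A. axis (a, j) (1::real)) $ (u, v) = of_bool (u = a \<and> v \<in> A)"
  for A :: "'a::finite set"
  by (cases "u = a") (auto simp: sum_component axis_def)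

lemma sum_axis_column_nth: "(\<Sum>j\<in>A. axis (j, a) (1::real)) $ (u, v) = of_bool (u \<in> A \<and> v = a)"
  for A :: "'a::finite set"
  by (cases "v = a") (auto simp: sum_component axis_def)

lemma weak_order_trans: "weak_order W \<Longrightarrow> (a, b) \<in> W \<Longrightarrow> (b, c) \<in> W \<Longrightarrow> (a, c) \<in> W"
  unfolding weak_order_def trans_def by blast

lemma weak_order_total: "weak_order W \<Longrightarrow> a \<noteq> b \<Longrightarrow> (a, b) \<in> W \<or> (b, a) \<in> W"
  unfolding weak_order_def total_on_def by blast

lemma char_vec_nth: "char_vec W $ (a, b) = of_bool (a \<noteq> b \<and> (a, b) \<in> W)"
  by (simp add: char_vec_def)

definition rank_vec :: "('n::finite \<Rightarrow> int) \<Rightarrow> real ^ ('n \<times> 'n)" where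
  "rank_vec r = char_vec {(a, b). r a \<le> r b}"

lemma weak_order_rank: "weak_order {(a, b). r a \<le> (r b :: int)}"
  unfolding weak_order_def refl_on_def trans_def total_on_def by auto

lemma rank_vec_nth: "rank_vec r $ (a, b) = of_bool (a \<noteq> b \<and> r a \<le> r b)"
  by (simp add: rank_vec_def char_vec_nth)

definition diagonal_axes :: "(real ^ ('n::finite \<times> 'n)) set" where
  "diagonal_axes = range (\<lambda>i. axis (i, i) 1)"

lemma diagonal_axes_inner_char_vec: "b \<in> diagonal_axes \<Longrightarrow> b \<bullet> char_vec W = 0"
  by (auto simp: diagonal_axes_def char_vec_def inner_axis')

locale distinguished_pair =
  fixes i1 i2 :: "'n::finite"
  assumes distinct: "i1 \<noteq> i2" and card_ge_4: "CARD('n) \<ge> 4"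
begin

definition Nc :: "'n set" where
  "Nc = UNIV - {i1, i2}"

definition Nc_pairs :: "('n \<times> 'n) set" where
  "Nc_pairs = {(j, j'). j \<in> Nc \<and> j' \<in> Nc \<and> j \<noteq> j'}"

definition pi_vec :: "real ^ ('n \<times> 'n)" where
  "pi_vec = axis (i2, i1) 1 + (\<Sum>j\<in>Nc. axis (i1, j) 1 + axis (j, i1) 1)
     - (\<Sum>j\<in>Nc. axis (i2, j) 1) - (\<Sum>p\<in>Nc_pairs. axis p 1)"

definition pi0 :: real where
  "pi0 = 2 - (real CARD('n) - 3) * (real CARD('n) - 4) / 2"

lemma notin_Nc [simp]: "i1 \<notin> Nc" "i2 \<notin> Nc"
  by (auto simp: Nc_def)

lemma in_Nc_iff: "j \<in> Nc \<longleftrightarrow> j \<noteq> i1 \<and> j \<noteq> i2"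
  by (auto simp: Nc_def)

lemma card_Nc: "card Nc = CARD('n) - 2"
  unfolding Nc_def using distinct by (simp add: card_Diff_subset)

lemma exists_other_in_Nc: "\<exists>k\<in>Nc. k \<noteq> j"
proof -
  have "\<not> Nc \<subseteq> {j}"
    using card_mono[of "{j}" Nc] card_Nc card_ge_4 by auto
  then show ?thesis
    by auto
qed

lemma two_in_Nc:
  obtains j k where "j \<in> Nc" "k \<in> Nc" "j \<noteq> k"
  by (metis exists_other_in_Nc)

lemma pi0_eq: "pi0 = real (card Nc) + 1 - real (card Nc) * (real (card Nc) - 1) / 2"
  unfolding pi0_def card_Nc using card_ge_4 by (simp add: of_nat_diff field_simps)

lemma card_Nc_pairs: "real (card Nc_pairs) = real (card Nc) * (real (card Nc) - 1)"
  unfolding Nc_pairs_def by (rule card_distinct_pairs) simp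

lemma pi_vec_nth: "pi_vec $ (u, v) =
    (if (u, v) = (i2, i1) \<or> u = i1 \<and> v \<in> Nc \<or> u \<in> Nc \<and> v = i1 then 1
     else if u = i2 \<and> v \<in> Nc \<or> (u, v) \<in> Nc_pairs then -1 else 0)"
proof -
  have "pi_vec $ (u, v) = of_bool ((u, v) = (i2, i1)) + of_bool (u = i1 \<and> v \<in> Nc)
      + of_bool (u \<in> Nc \<and> v = i1) - of_bool (u = i2 \<and> v \<in> Nc) - of_bool ((u, v) \<in> Nc_pairs)"
    unfolding pi_vec_def
    by (simp only: vector_minus_component vector_add_component sum.distrib sum_axis_nth
        sum_axis_row_nth sum_axis_column_nth) (simp add: axis_def)
  then show ?thesis
    using distinct by (auto simp: Nc_pairs_def)
qed

lemma inner_pi_vec: "pi_vec \<bullet> x = x $ (i2, i1) + (\<Sum>j\<in>Nc. x $ (i1, j) + x $ (j, i1))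
    - (\<Sum>j\<in>Nc. x $ (i2, j)) - (\<Sum>p\<in>Nc_pairs. x $ p)"
  unfolding pi_vec_def
  by (simp add: inner_diff_left inner_add_left inner_sum_left inner_axis' sum.distrib)

lemma sum_Nc_pairs_symmetric:
  "2 * (\<Sum>p\<in>Nc_pairs. x $ p) = (\<Sum>p\<in>Nc_pairs. x $ p + x $ (snd p, fst p))"
  for x :: "real ^ ('n \<times> 'n)"
proof -
  have "(\<Sum>p\<in>Nc_pairs. x $ p) = (\<Sum>p\<in>Nc_pairs. x $ (snd p, fst p))"
    by (rule sum.reindex_bij_witness[where i = prod.swap and j = prod.swap])
       (auto simp: Nc_pairs_def)
  then show ?thesis
    by (simp add: sum.distrib)
qed

definition ties_i1 :: "('n \<times> 'n) set \<Rightarrow> 'n set" where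
  "ties_i1 W = {j \<in> Nc. (i1, j) \<in> W \<and> (j, i1) \<in> W}"

lemma ties_i1_subset: "ties_i1 W \<subseteq> Nc"
  by (auto simp: ties_i1_def)

lemma sum_i1_char_vec:
  assumes "weak_order W"
  shows "(\<Sum>j\<in>Nc. char_vec W $ (i1, j) + char_vec W $ (j, i1))
           = real (card Nc) + real (card (ties_i1 W))"
proof -
  have "(\<Sum>j\<in>Nc. char_vec W $ (i1, j) + char_vec W $ (j, i1)) = (\<Sum>j\<in>Nc. 1 + of_bool (j \<in> ties_i1 W))"
    using weak_order_total[OF assms] by (intro sum.cong) (auto simp: char_vec_nth ties_i1_def in_Nc_iff)
  then show ?thesis
    using ties_i1_subset by (simp add: sum.distrib Int_absorb1)
qed

lemma sum_i2_char_vec_ge: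
  assumes "weak_order W"
  shows "char_vec W $ (i2, i1) * real (card (ties_i1 W)) \<le> (\<Sum>j\<in>Nc. char_vec W $ (i2, j))"
proof -
  have "char_vec W $ (i2, i1) * real (card (ties_i1 W)) = (\<Sum>j\<in>Nc. char_vec W $ (i2, i1) * of_bool (j \<in> ties_i1 W))"
    using ties_i1_subset by (simp add: sum_distrib_left[symmetric] Int_absorb1)
  also have "\<dots> \<le> (\<Sum>j\<in>Nc. char_vec W $ (i2, j))"
    using weak_order_trans[OF assms, of i2 i1]
    by (intro sum_mono) (auto simp: char_vec_nth ties_i1_def in_Nc_iff)
  finally show ?thesis .
qed

lemma sum_Nc_pairs_char_vec_ge:
  assumes W: "weak_order W"
  defines "m \<equiv> real (card Nc)" and "t \<equiv> real (card (ties_i1 W))"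
  shows "m * (m - 1) + t * (t - 1) \<le> 2 * (\<Sum>p\<in>Nc_pairs. char_vec W $ p)"
proof -
  let ?T = "ties_i1 W" and ?x = "char_vec W"
  have "Nc_pairs \<inter> {p. p \<in> ?T \<times> ?T} = {(a, b). a \<in> ?T \<and> b \<in> ?T \<and> a \<noteq> b}"
    using ties_i1_subset by (auto simp: Nc_pairs_def)
  then have "m * (m - 1) + t * (t - 1) = (\<Sum>p\<in>Nc_pairs. 1 + of_bool (p \<in> ?T \<times> ?T))"
    by (simp add: sum.distrib card_Nc_pairs card_distinct_pairs m_def t_def)
  also have "\<dots> \<le> (\<Sum>p\<in>Nc_pairs. ?x $ p + ?x $ (snd p, fst p))"
  proof (rule sum_mono)
    fix p assume "p \<in> Nc_pairs"
    then obtain a b where "p = (a, b)" "a \<noteq> b"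
      by (auto simp: Nc_pairs_def)
    then show "1 + of_bool (p \<in> ?T \<times> ?T) \<le> ?x $ p + ?x $ (snd p, fst p)"
      using weak_order_total[OF W, of a b] weak_order_trans[OF W, of a i1 b]
        weak_order_trans[OF W, of b i1 a]
      by (auto simp: char_vec_nth ties_i1_def)
  qed
  finally show ?thesis
    by (simp add: sum_Nc_pairs_symmetric)
qed

lemma pi_vec_char_vec_le:
  assumes "weak_order W"
  shows "pi_vec \<bullet> char_vec W \<le> pi0"
proof -
  define x where "x = char_vec W"
  define m where "m = real (card Nc)"
  define t where "t = real (card (ties_i1 W))"
  note ties = sum_i1_char_vec[OF assms, folded x_def m_def t_def]
  note row_i2 = sum_i2_char_vec_ge[OF assms, folded x_def t_def]
  note pairs = sum_Nc_pairs_char_vec_ge[OF assms, folded x_def m_def t_def]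
  have "0 \<le> t * (t - 1)"
    unfolding t_def by (cases "card (ties_i1 W)") auto
  have "2 * t - 2 \<le> t * (t - 1)"
    unfolding t_def by (rule of_nat_mult_pred_ge)
  consider "x $ (i2, i1) = 0" | "x $ (i2, i1) = 1"
    by (auto simp: x_def char_vec_nth)
  then have "pi_vec \<bullet> x \<le> m + 1 - m * (m - 1) / 2"
  proof cases
    case 1
    with row_i2 have "0 \<le> (\<Sum>j\<in>Nc. x $ (i2, j))" by simp
    with 1 show ?thesis
      using ties pairs \<open>2 * t - 2 \<le> t * (t - 1)\<close> unfolding inner_pi_vec by linarith
  next
    case 2
    with row_i2 have "t \<le> (\<Sum>j\<in>Nc. x $ (i2, j))" by simp
    with 2 show ?thesis
      using ties pairs \<open>0 \<le> t * (t - 1)\<close> unfolding inner_pi_vec by linarith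
  qed
  then show ?thesis
    by (simp add: x_def pi0_eq m_def)
qed

section \<open>Tight vertices and the equations of the face\<close>

(* The elements outside {i1, i2, j, k} get pairwise distinct ranks below all others, so that
   only the relative positions of i1, i2, j and k vary. *)
definition ranking :: "'n \<Rightarrow> 'n \<Rightarrow> int \<Rightarrow> int \<Rightarrow> int \<Rightarrow> 'n \<Rightarrow> int" where
  "ranking j k a b c x =
     (if x = i1 then a else if x = i2 then b else if x = j then c else if x = k then -2
      else - int (to_nat x) - 10)"

lemma rank_vec_differences:
  assumes "j \<in> Nc" "k \<in> Nc" "j \<noteq> k"
  shows "rank_vec (ranking j k (-2) 5 0) - rank_vec (ranking j k 0 5 0) = axis (i1, k) 1 - axis (j, i1) 1"
    and "rank_vec (ranking j k (-2) 5 (-2)) - rank_vec (ranking j k (-2) 5 0) = axis (j, k) 1 + axis (j, i1) 1"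
    and "rank_vec (ranking j k 5 5 0) - rank_vec (ranking j k 6 5 0) = axis (i1, i2) 1"
    and "rank_vec (ranking j k 0 0 0) - rank_vec (ranking j k 0 (-1) 0) = axis (j, i2) 1 + axis (i1, i2) 1"
    and "rank_vec (ranking j k 0 (-1) 0) - rank_vec (ranking j k 0 5 0)
           = axis (i2, j) 1 + axis (i2, i1) 1 - axis (j, i2) 1 - axis (i1, i2) 1"
    and "rank_vec (ranking j k 0 5 0) - rank_vec (ranking j k 6 5 0)
           = axis (i1, j) 1 + axis (i1, i2) 1 - axis (i2, i1) 1"
    and "rank_vec (ranking j k (-1) 5 0) - rank_vec (ranking j k 0 5 0) = - axis (j, i1) 1"
  using assms distinct by (auto simp: vec_eq_iff rank_vec_nth ranking_def axis_def in_Nc_iff)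

lemma ranking_inj_on_Nc:
  assumes "j \<in> Nc" "k \<in> Nc" "j \<noteq> k"
  shows "inj_on (ranking j k a b 0) Nc"
  using assms inj_to_nat[where 'a = 'n]
  by (auto simp: inj_on_def ranking_def in_Nc_iff inj_eq)

lemma pi_vec_inner_base_ranking:
  assumes "j \<in> Nc" "k \<in> Nc" "j \<noteq> k"
  shows "pi_vec \<bullet> rank_vec (ranking j k 0 5 0) = pi0"
proof -
  define r where "r = ranking j k 0 5 0"
  define x where "x = rank_vec r"
  define m where "m = real (card Nc)"
  have "x $ (i2, i1) = 0"
    using distinct by (simp add: x_def r_def rank_vec_nth ranking_def)
  moreover have "(\<Sum>l\<in>Nc. x $ (i1, l) + x $ (l, i1)) = m + 1"
  proof -
    have "(\<Sum>l\<in>Nc. x $ (i1, l) + x $ (l, i1)) = (\<Sum>l\<in>Nc. 1 + of_bool (l = j))"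
      using assms distinct by (intro sum.cong) (auto simp: x_def r_def rank_vec_nth ranking_def in_Nc_iff)
    then show ?thesis
      using assms(1) by (simp add: sum.distrib m_def)
  qed
  moreover have "(\<Sum>l\<in>Nc. x $ (i2, l)) = 0"
    using assms distinct by (intro sum.neutral) (auto simp: x_def r_def rank_vec_nth ranking_def in_Nc_iff)
  moreover have "2 * (\<Sum>p\<in>Nc_pairs. x $ p) = m * (m - 1)"
  proof -
    have "x $ p + x $ (snd p, fst p) = 1" if "p \<in> Nc_pairs" for p
    proof -
      obtain a b where "p = (a, b)" "a \<in> Nc" "b \<in> Nc" "a \<noteq> b"
        using \<open>p \<in> Nc_pairs\<close> by (cases p) (auto simp: Nc_pairs_def)
      then have "r a \<noteq> r b"
        using ranking_inj_on_Nc[OF assms] by (auto simp: r_def inj_on_def)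
      then show ?thesis
        using \<open>p = (a, b)\<close> \<open>a \<noteq> b\<close> by (auto simp: x_def rank_vec_nth)
    qed
    then show ?thesis
      by (simp add: sum_Nc_pairs_symmetric card_Nc_pairs m_def)
  qed
  ultimately have "pi_vec \<bullet> x = m + 1 - m * (m - 1) / 2"
    unfolding inner_pi_vec by linarith
  then show ?thesis
    by (simp add: x_def r_def pi0_eq m_def)
qed

lemma pi_vec_inner_rankings:
  assumes "j \<in> Nc" "k \<in> Nc" "j \<noteq> k"
  shows "pi_vec \<bullet> rank_vec (ranking j k (-2) 5 0) = pi0"
    and "pi_vec \<bullet> rank_vec (ranking j k (-2) 5 (-2)) = pi0"
    and "pi_vec \<bullet> rank_vec (ranking j k 6 5 0) = pi0"
    and "pi_vec \<bullet> rank_vec (ranking j k 5 5 0) = pi0"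
    and "pi_vec \<bullet> rank_vec (ranking j k 0 (-1) 0) = pi0"
    and "pi_vec \<bullet> rank_vec (ranking j k 0 0 0) = pi0"
    and "pi_vec \<bullet> rank_vec (ranking j k (-1) 5 0) = pi0 - 1"
proof -
  have step: "pi_vec \<bullet> rank_vec r = pi_vec \<bullet> rank_vec r' + pi_vec \<bullet> d"
    if "rank_vec r - rank_vec r' = d" for r r' d
    using that[symmetric] by (simp add: inner_diff_right)
  note base = pi_vec_inner_base_ranking[OF assms]
  note diff = rank_vec_differences[OF assms]
  note coordinates = pi_vec_nth in_Nc_iff Nc_pairs_def inner_add_right inner_diff_right inner_axis
  show i1_with_k: "pi_vec \<bullet> rank_vec (ranking j k (-2) 5 0) = pi0"
    using step[OF diff(1)] base assms distinct by (simp add: coordinates)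
  show "pi_vec \<bullet> rank_vec (ranking j k (-2) 5 (-2)) = pi0"
    using step[OF diff(2)] i1_with_k assms distinct by (simp add: coordinates)
  show i1_top: "pi_vec \<bullet> rank_vec (ranking j k 6 5 0) = pi0"
    using step[OF diff(6)] base assms distinct by (simp add: coordinates)
  show "pi_vec \<bullet> rank_vec (ranking j k 5 5 0) = pi0"
    using step[OF diff(3)] i1_top assms distinct by (simp add: coordinates)
  show i2_middle: "pi_vec \<bullet> rank_vec (ranking j k 0 (-1) 0) = pi0"
    using step[OF diff(5)] base assms distinct by (simp add: coordinates)
  show "pi_vec \<bullet> rank_vec (ranking j k 0 0 0) = pi0"
    using step[OF diff(4)] i2_middle assms distinct by (simp add: coordinates)
  show "pi_vec \<bullet> rank_vec (ranking j k (-1) 5 0) = pi0 - 1"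
    using step[OF diff(7)] base assms distinct by (simp add: coordinates)
qed

definition tight_equation :: "real ^ ('n \<times> 'n) \<Rightarrow> real \<Rightarrow> bool" where
  "tight_equation y c \<longleftrightarrow> (\<forall>r. pi_vec \<bullet> rank_vec r = pi0 \<longrightarrow> y \<bullet> rank_vec r = c)"

lemma tight_equation_coeffs:
  assumes "tight_equation y c"
    and jk: "j \<in> Nc" "k \<in> Nc" "j \<noteq> k"
  shows "y $ (i1, i2) = 0" and "y $ (j, i2) = 0" and "y $ (i2, j) = - y $ (i2, i1)"
    and "y $ (i1, j) = y $ (i2, i1)" and "y $ (j, i1) = y $ (i2, i1)" and "y $ (j, k) = - y $ (i2, i1)"
proof -
  have difference_orthogonal: "y \<bullet> d = 0"
    if "rank_vec r - rank_vec r' = d" "pi_vec \<bullet> rank_vec r = pi0" "pi_vec \<bullet> rank_vec r' = pi0" for r r' d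
  proof -
    have "y \<bullet> rank_vec r = c" "y \<bullet> rank_vec r' = c"
      using assms(1) that(2,3) unfolding tight_equation_def by blast+
    then show ?thesis
      using that(1)[symmetric] by (simp add: inner_diff_right)
  qed
  note coordinates = inner_add_right inner_diff_right inner_axis
  have i1_row: "y $ (i1, l) = y $ (i2, i1)" and i1_i2_zero: "y $ (i1, i2) = 0"
    if "l \<in> Nc" "l' \<in> Nc" "l \<noteq> l'" for l l'
  proof -
    note tight = pi_vec_inner_base_ranking[OF that] pi_vec_inner_rankings[OF that]
    note diff = rank_vec_differences[OF that]
    show "y $ (i1, i2) = 0"
      using difference_orthogonal[OF diff(3) tight(5) tight(4)] by (simp add: coordinates)
    then show "y $ (i1, l) = y $ (i2, i1)"
      using difference_orthogonal[OF diff(6) tight(1) tight(4)] by (simp add: coordinates)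
  qed
  note tight = pi_vec_inner_base_ranking[OF jk] pi_vec_inner_rankings[OF jk]
  note diff = rank_vec_differences[OF jk]
  show i1_i2: "y $ (i1, i2) = 0"
    by (rule i1_i2_zero[OF jk])
  show j_i2: "y $ (j, i2) = 0"
    using difference_orthogonal[OF diff(4) tight(7) tight(6)] i1_i2 by (simp add: coordinates)
  show "y $ (i2, j) = - y $ (i2, i1)"
    using difference_orthogonal[OF diff(5) tight(6) tight(1)] i1_i2 j_i2 by (simp add: coordinates)
  show "y $ (i1, j) = y $ (i2, i1)"
    by (rule i1_row[OF jk])
  show j_i1: "y $ (j, i1) = y $ (i2, i1)"
    using difference_orthogonal[OF diff(1) tight(2) tight(1)] i1_row[OF jk(2,1) jk(3)[symmetric]] by (simp add: coordinates)
  show "y $ (j, k) = - y $ (i2, i1)"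
    using difference_orthogonal[OF diff(2) tight(3) tight(2)] j_i1 by (simp add: coordinates)
qed

lemma tight_equation_off_diagonal:
  assumes "tight_equation y c" and "u \<noteq> v"
  shows "y $ (u, v) = y $ (i2, i1) * pi_vec $ (u, v)"
proof -
  note coeffs = tight_equation_coeffs[OF assms(1)]
  have [simp]: "pi_vec $ (i1, i2) = 0" "pi_vec $ (i2, i1) = 1"
    and [simp]: "j \<in> Nc \<Longrightarrow> pi_vec $ (i1, j) = 1" "j \<in> Nc \<Longrightarrow> pi_vec $ (j, i1) = 1"
    and [simp]: "j \<in> Nc \<Longrightarrow> pi_vec $ (i2, j) = -1" "j \<in> Nc \<Longrightarrow> pi_vec $ (j, i2) = 0"
    and [simp]: "j \<in> Nc \<Longrightarrow> k \<in> Nc \<Longrightarrow> j \<noteq> k \<Longrightarrow> pi_vec $ (j, k) = -1" for j k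
    using distinct by (auto simp: pi_vec_nth Nc_pairs_def)
  consider "u = i1" "v = i2" | "u = i2" "v = i1" | "u \<in> {i1, i2}" "v \<in> Nc"
    | "u \<in> Nc" "v \<in> {i1, i2}" | "u \<in> Nc" "v \<in> Nc"
    using \<open>u \<noteq> v\<close> by (auto simp: in_Nc_iff)
  then show ?thesis
  proof cases
    case 1
    obtain j k where "j \<in> Nc" "k \<in> Nc" "j \<noteq> k"
      by (rule two_in_Nc)
    with 1 show ?thesis
      using coeffs(1) by simp
  next
    case 2
    then show ?thesis
      by simp
  next
    case 3
    obtain k where "k \<in> Nc" "v \<noteq> k"
      using exists_other_in_Nc by metis
    with 3 show ?thesis
      using coeffs(3,4)[OF \<open>v \<in> Nc\<close> \<open>k \<in> Nc\<close> \<open>v \<noteq> k\<close>] by auto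
  next
    case 4
    obtain k where "k \<in> Nc" "u \<noteq> k"
      using exists_other_in_Nc by metis
    with 4 show ?thesis
      using coeffs(2,5)[OF \<open>u \<in> Nc\<close> \<open>k \<in> Nc\<close> \<open>u \<noteq> k\<close>] by auto
  next
    case 5
    then show ?thesis
      using coeffs(6) \<open>u \<noteq> v\<close> by simp
  qed
qed

lemma tight_equation_in_span:
  assumes "tight_equation y c"
  shows "y \<in> span (insert pi_vec diagonal_axes)"
proof -
  define z where "z = y $ (i2, i1) *\<^sub>R pi_vec + (\<Sum>i\<in>UNIV. y $ (i, i) *\<^sub>R axis (i, i) 1)"
  have "y = z"
    unfolding z_def
  proof (subst vec_eq_iff, clarify)
    fix u v
    have diagonal: "(\<Sum>i\<in>UNIV. y $ (i, i) *\<^sub>R axis (i, i) (1::real)) $ (u, v) = (if u = v then y $ (u, u) else 0)"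
      by (cases "u = v") (auto simp: sum_component axis_def if_distrib cong: if_cong intro!: sum.neutral)
    show "y $ (u, v) = (y $ (i2, i1) *\<^sub>R pi_vec + (\<Sum>i\<in>UNIV. y $ (i, i) *\<^sub>R axis (i, i) 1)) $ (u, v)"
      unfolding vector_add_component vector_scaleR_component diagonal
      using tight_equation_off_diagonal[OF assms, of u v] distinct
      by (cases "u = v") (auto simp: pi_vec_nth Nc_pairs_def)
  qed
  moreover have "z \<in> span (insert pi_vec diagonal_axes)"
    unfolding z_def by (intro span_add span_scale span_sum span_base) (auto simp: diagonal_axes_def)
  ultimately show ?thesis
    by simp
qed

lemma defines_facet_pi_vec: "defines_facet (weak_order_polytope :: (real ^ ('n \<times> 'n)) set) pi_vec pi0"
proof -
  define V where "V = {char_vec W | W :: ('n \<times> 'n) set. weak_order W}"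
  have rank_vec_in_V: "rank_vec r \<in> V" for r
    unfolding V_def rank_vec_def using weak_order_rank by blast
  obtain j k where jk: "j \<in> Nc" "k \<in> Nc" "j \<noteq> k"
    by (rule two_in_Nc)
  show ?thesis
    unfolding weak_order_polytope_def V_def[symmetric]
  proof (rule defines_facet_convex_hullI[where B = diagonal_axes])
    show "pi_vec \<bullet> v \<le> pi0" if "v \<in> V" for v
      using that pi_vec_char_vec_le by (auto simp: V_def)
    show "rank_vec (ranking j k 0 5 0) \<in> V" "pi_vec \<bullet> rank_vec (ranking j k 0 5 0) = pi0"
      using rank_vec_in_V pi_vec_inner_base_ranking[OF jk] by simp_all
    show "rank_vec (ranking j k (-1) 5 0) \<in> V" "pi_vec \<bullet> rank_vec (ranking j k (-1) 5 0) \<noteq> pi0"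
      using rank_vec_in_V pi_vec_inner_rankings(7)[OF jk] by simp_all
    show "b \<bullet> v = 0" if "v \<in> V" "b \<in> diagonal_axes" for v b
      using that diagonal_axes_inner_char_vec by (auto simp: V_def)
    show "y \<in> span (insert pi_vec diagonal_axes)"
      if "\<And>v. v \<in> V \<Longrightarrow> pi_vec \<bullet> v = pi0 \<Longrightarrow> y \<bullet> v = c" for y c
      using that rank_vec_in_V by (intro tight_equation_in_span) (auto simp: tight_equation_def)
  qed
qed

end

theorem mainTheorem9:
  fixes i1 i2 :: "'n::finite"
  assumes "CARD('n) \<ge> 4" and "i1 \<noteq> i2"
  shows "let Nc = UNIV - {i1, i2};
             \<pi> = axis (i2, i1) 1
                 + (\<Sum>j\<in>Nc. axis (i1, j) 1 + axis (j, i1) 1)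
                 - (\<Sum>j\<in>Nc. axis (i2, j) 1)
                 - (\<Sum>p\<in>{(j, j'). j \<in> Nc \<and> j' \<in> Nc \<and> j \<noteq> j'}. axis p 1)
         in defines_facet (weak_order_polytope :: (real ^ ('n \<times> 'n)) set) \<pi>
              (2 - (real CARD('n) - 3) * (real CARD('n) - 4) / 2)"
proof -
  interpret distinguished_pair i1 i2
    using assms by unfold_locales auto
  show ?thesis
    using defines_facet_pi_vec unfolding Let_def pi_vec_def Nc_pairs_def Nc_def pi0_def .
qed

end
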